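(* Let $q=2^h$. In ${\rm PG}(4,q)$ with homogeneous coordinates $(X_1,\dots,X_5)$ let $\pi$ be the plane $X_4=X_5=0$, $\ell$ the line $X_1=X_4=X_5=0$, $\Sigma$ the solid $X_1=0$, $N=(1,0,0,0,0)$, $\mathcal H$ the hyperbolic quadric of $\Sigma$ with equation $X_2X_5+X_3X_4=0$ (and $X_1=0$), $\mathcal C$ the quadratic cone of ${\rm PG}(4,q)$ with equation $X_2X_5+X_3X_4=0$ (vertex $N$, base $\mathcal H$), and let $\mathcal Q_1,\dots,\mathcal Q_{q-1}$ be the $q-1$ parabolic quadrics $X_2X_5+X_3X_4+\lambda X_1^2=0$, $\lambda\in{\rm GF}(q)\setminus\{0\}$. Let $\alpha\in{\rm GF}(q)$ be such that $X^2+X+\alpha$ is irreducible over ${\rm GF}(q)$ and let $G=\{M_{a,b,c,d}: a\in{\rm GF}(q)\setminus\{0\},\ b,c,d\in{\rm GF}(q),\ c^2+cd+\alpha d^2=1\}$, where $$M_{a,b,c,d}=\begin{pmatrix}1&0&0&0&0\\0&ac&\alpha ad&bc&\alpha bd\\0&ad&a(c+d)&bd&b(c+d)\\0&0&0&a^{-1}c&\alpha a^{-1}d\\0&0&0&a^{-1}d&a^{-1}(c+d)\end{pmatrix},$$ acting on points (column vectors) by left multiplication. Then $G$ has exactly $q+5$ orbits on the points of ${\rm PG}(4,q)$: (a) $\{N\}$; (b) an orbit of size $q+1$ consisting of the points of $\ell$; (c) an orbit of size $q^2-1$ consisting of the points of $\pi\setminus(\ell\cup\{N\})$; (d) an orbit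 of size $q^2+q$ consisting of the points of $\mathcal H\setminus\ell$; (e) an orbit of size $q^3-q$ consisting of the points of $\Sigma\setminus\mathcal H$; (f) an orbit of size $q^3-q$ consisting of the points of $\mathcal C\setminus(\pi\cup\mathcal H)$; (g) $q-1$ orbits of size $q^3-q$, namely the sets $\mathcal Q_i\setminus\mathcal H$, $1\le i\le q-1$. *)

theory Defs
  imports "HOL-Library.Cardinality" "HOL-Computational_Algebra.Polynomial" "HOL-Computational_Algebra.Polynomial_Factorial"
begin

text \<open>Vectors of GF(q)^5 are functions on nat, with coordinates X_1..X_5 at indices 1..5
  and value 0 elsewhere. 5x5 matrices are functions nat => nat => 'a (rows, columns 1..5).\<close>

definition vecs5 :: "(nat \<Rightarrow> 'a::zero) set" where
  "vecs5 = {v. \<forall>i. i \<notin> {1..5} \<longrightarrow> v i = 0}"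

definition proj_pt :: "(nat \<Rightarrow> 'a::field) \<Rightarrow> (nat \<Rightarrow> 'a) set" where
  "proj_pt v = {(\<lambda>i. c * v i) | c. c \<noteq> 0}"

definition pts_where :: "((nat \<Rightarrow> 'a::field) \<Rightarrow> bool) \<Rightarrow> (nat \<Rightarrow> 'a) set set" where
  "pts_where F = {proj_pt v | v. v \<in> vecs5 \<and> v \<noteq> (\<lambda>_. 0) \<and> F v}"

definition PG4 :: "(nat \<Rightarrow> 'a::field) set set" where
  "PG4 = pts_where (\<lambda>_. True)"

definition mat_vec :: "(nat \<Rightarrow> nat \<Rightarrow> 'a::field) \<Rightarrow> (nat \<Rightarrow> 'a) \<Rightarrow> (nat \<Rightarrow> 'a)" where
  "mat_vec M v = (\<lambda>i. if i \<in> {1..5} then (\<Sum>j=1..5. M i j * v j) else 0)"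

definition act :: "(nat \<Rightarrow> nat \<Rightarrow> 'a::field) \<Rightarrow> (nat \<Rightarrow> 'a) set \<Rightarrow> (nat \<Rightarrow> 'a) set" where
  "act M P = mat_vec M ` P"

definition orbit :: "(nat \<Rightarrow> nat \<Rightarrow> 'a::field) set \<Rightarrow> (nat \<Rightarrow> 'a) set \<Rightarrow> (nat \<Rightarrow> 'a) set set" where
  "orbit G P = {act M P | M. M \<in> G}"

definition orbits :: "(nat \<Rightarrow> nat \<Rightarrow> 'a::field) set \<Rightarrow> (nat \<Rightarrow> 'a) set set set" where
  "orbits G = {orbit G P | P. P \<in> PG4}"

definition Mabcd :: "'a::field \<Rightarrow> 'a \<Rightarrow> 'a \<Rightarrow> 'a \<Rightarrow> 'a \<Rightarrow> nat \<Rightarrow> nat \<Rightarrow> 'a" where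
  "Mabcd \<alpha> a b c d = (\<lambda>i j.
     [[1, 0, 0, 0, 0],
      [0, a*c, \<alpha>*a*d, b*c, \<alpha>*b*d],
      [0, a*d, a*(c+d), b*d, b*(c+d)],
      [0, 0, 0, inverse a * c, \<alpha> * inverse a * d],
      [0, 0, 0, inverse a * d, inverse a * (c+d)]] ! (i - 1) ! (j - 1))"

definition Ggrp :: "'a::field \<Rightarrow> (nat \<Rightarrow> nat \<Rightarrow> 'a) set" where
  "Ggrp \<alpha> = {Mabcd \<alpha> a b c d | a b c d. a \<noteq> 0 \<and> c^2 + c*d + \<alpha>*d^2 = 1}"

definition ptN :: "(nat \<Rightarrow> 'a::field) set" where
  "ptN = proj_pt (\<lambda>i. if i = 1 then 1 else 0)"

definition plane_pi :: "(nat \<Rightarrow> 'a::field) set set" where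
  "plane_pi = pts_where (\<lambda>x. x 4 = 0 \<and> x 5 = 0)"

definition line_l :: "(nat \<Rightarrow> 'a::field) set set" where
  "line_l = pts_where (\<lambda>x. x 1 = 0 \<and> x 4 = 0 \<and> x 5 = 0)"

definition solid_Sigma :: "(nat \<Rightarrow> 'a::field) set set" where
  "solid_Sigma = pts_where (\<lambda>x. x 1 = 0)"

definition quadric_H :: "(nat \<Rightarrow> 'a::field) set set" where
  "quadric_H = pts_where (\<lambda>x. x 1 = 0 \<and> x 2 * x 5 + x 3 * x 4 = 0)"

definition cone_C :: "(nat \<Rightarrow> 'a::field) set set" where
  "cone_C = pts_where (\<lambda>x. x 2 * x 5 + x 3 * x 4 = 0)"

definition quadric_Q :: "'a::field \<Rightarrow> (nat \<Rightarrow> 'a) set set" where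
  "quadric_Q lam = pts_where (\<lambda>x. x 2 * x 5 + x 3 * x 4 + lam * (x 1)^2 = 0)"

end

theory Submission
  imports Defs "HOL-Number_Theory.Residues"
begin

text \<open>In characteristic 2 every matrix of G fixes X1 and the quadratic form X2 X5 + X3 X4, and
  it maps the plane X4 = X5 = 0 and the vertex N to themselves. A point is therefore classified
  by whether it is N, lies on the line, on the plane, on H or in the solid, and otherwise by the
  value of -(X2 X5 + X3 X4) / X1^2; this yields q + 5 strata. Conversely G is transitive on
  each stratum: the lower right block of M acts on (X4, X5) as a scaled norm-1 element of
  GF(q^2), which reaches every nonzero (X4, X5) up to a scalar, since every element of GF(q)
  is a square; the entry b then adjusts (X2, X3).\<close>

section \<open>Coordinates and projective points\<close>

definition vec5 :: "'a::zero \<Rightarrow> 'a \<Rightarrow> 'a \<Rightarrow> 'a \<Rightarrow> 'a \<Rightarrow> nat \<Rightarrow> 'a" where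
  "vec5 x1 x2 x3 x4 x5 = (\<lambda>i. if i = 1 then x1 else if i = 2 then x2 else if i = 3 then x3
     else if i = 4 then x4 else if i = 5 then x5 else 0)"

lemma vec5_apply [simp]:
  "vec5 x1 x2 x3 x4 x5 1 = x1" "vec5 x1 x2 x3 x4 x5 2 = x2" "vec5 x1 x2 x3 x4 x5 3 = x3"
  "vec5 x1 x2 x3 x4 x5 4 = x4" "vec5 x1 x2 x3 x4 x5 5 = x5" "vec5 x1 x2 x3 x4 x5 (Suc 0) = x1"
  by (simp_all add: vec5_def)

lemma vec5_in_vecs5 [simp]: "vec5 x1 x2 x3 x4 x5 \<in> vecs5"
  by (simp add: vecs5_def vec5_def)

lemma vecs5_eq_vec5: "v \<in> vecs5 \<Longrightarrow> v = vec5 (v 1) (v 2) (v 3) (v 4) (v 5)"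
  by (auto simp: vecs5_def vec5_def fun_eq_iff)

lemma vec5_eq_iff:
  "vec5 x1 x2 x3 x4 x5 = vec5 y1 y2 y3 y4 y5 \<longleftrightarrow> x1 = y1 \<and> x2 = y2 \<and> x3 = y3 \<and> x4 = y4 \<and> x5 = y5"
proof
  assume "vec5 x1 x2 x3 x4 x5 = vec5 y1 y2 y3 y4 y5"
  from this[THEN fun_cong, of 1] this[THEN fun_cong, of 2] this[THEN fun_cong, of 3]
    this[THEN fun_cong, of 4] this[THEN fun_cong, of 5]
  show "x1 = y1 \<and> x2 = y2 \<and> x3 = y3 \<and> x4 = y4 \<and> x5 = y5" by simp
qed simp

lemma vec5_eq_zero_iff:
  "vec5 x1 x2 x3 x4 x5 = (\<lambda>_. 0) \<longleftrightarrow> x1 = 0 \<and> x2 = 0 \<and> x3 = 0 \<and> x4 = 0 \<and> x5 = 0"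
proof -
  have "(\<lambda>_. 0) = vec5 0 0 0 0 (0::'a)" by (simp add: vec5_def fun_eq_iff)
  then show ?thesis by (simp add: vec5_eq_iff)
qed

lemma vecs5_nonzeroE:
  assumes "v \<in> vecs5" and "v \<noteq> (\<lambda>_. 0)"
  obtains x1 x2 x3 x4 x5 where "v = vec5 x1 x2 x3 x4 x5"
    and "\<not> (x1 = 0 \<and> x2 = 0 \<and> x3 = 0 \<and> x4 = 0 \<and> x5 = 0)"
  using assms vecs5_eq_vec5 vec5_eq_zero_iff by metis

lemma smult_vec5:
  "(\<lambda>i. (c::'a::mult_zero) * vec5 x1 x2 x3 x4 x5 i) = vec5 (c*x1) (c*x2) (c*x3) (c*x4) (c*x5)"
  by (simp add: vec5_def fun_eq_iff)

lemma sum_atLeast1_atMost5: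
  "(\<Sum>j::nat=1..5. f j) = f 1 + f 2 + f 3 + f 4 + (f 5 :: 'a::comm_monoid_add)"
proof -
  have "{1..5::nat} = {1,2,3,4,5}" by auto
  then show ?thesis by (simp add: add.assoc)
qed

lemma mat_vec_Mabcd:
  "mat_vec (Mabcd \<alpha> a b c d) v = vec5 (v 1)
     (a*c*v 2 + \<alpha>*a*d*v 3 + b*c*v 4 + \<alpha>*b*d*v 5)
     (a*d*v 2 + a*(c+d)*v 3 + b*d*v 4 + b*(c+d)*v 5)
     (inverse a*c*v 4 + \<alpha>*inverse a*d*v 5)
     (inverse a*d*v 4 + inverse a*(c+d)*v 5)"
  unfolding mat_vec_def sum_atLeast1_atMost5 by (auto simp: vec5_def Mabcd_def fun_eq_iff)

lemma mat_vec_smult: "mat_vec M (\<lambda>i. c * v i) = (\<lambda>i. c * mat_vec M v i)"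
  by (simp add: mat_vec_def fun_eq_iff sum_distrib_left algebra_simps)

lemma mat_vec_zero: "mat_vec M (\<lambda>_. 0) = (\<lambda>_. 0)"
  by (simp add: mat_vec_def fun_eq_iff)

lemma mat_vec_in_vecs5 [simp]: "mat_vec M v \<in> vecs5"
  by (simp add: vecs5_def mat_vec_def)

lemma proj_pt_smult:
  assumes "c \<noteq> 0"
  shows "proj_pt (\<lambda>i. c * v i) = proj_pt v"
  unfolding proj_pt_def
proof (intro equalityI subsetI; clarify)
  fix d :: 'a assume "d \<noteq> 0"
  then show "\<exists>e. (\<lambda>i. d * (c * v i)) = (\<lambda>i. e * v i) \<and> e \<noteq> 0"
    using assms by (intro exI[of _ "d * c"]) (simp add: mult.assoc)
next
  fix e :: 'a assume "e \<noteq> 0"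
  then show "\<exists>d. (\<lambda>i. e * v i) = (\<lambda>i. d * (c * v i)) \<and> d \<noteq> 0"
    using assms by (intro exI[of _ "e / c"]) simp
qed

lemma proj_pt_eqD:
  assumes "proj_pt v = proj_pt w"
  shows "\<exists>c. c \<noteq> 0 \<and> w = (\<lambda>i. c * v i)"
proof -
  have "w \<in> proj_pt w"
    unfolding proj_pt_def by (rule CollectI, rule exI[of _ 1]) simp
  with assms show ?thesis unfolding proj_pt_def by auto
qed

lemma act_proj_pt: "act M (proj_pt v) = proj_pt (mat_vec M v)"
proof -
  have "mat_vec M ` {(\<lambda>i. c * v i) | c. c \<noteq> 0} = {mat_vec M (\<lambda>i. c * v i) | c. c \<noteq> 0}"
    by blast
  then show ?thesis unfolding act_def proj_pt_def by (simp add: mat_vec_smult)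
qed

definition homogeneous :: "((nat \<Rightarrow> 'a::field) \<Rightarrow> bool) \<Rightarrow> bool" where
  "homogeneous F \<longleftrightarrow> (\<forall>v c. c \<noteq> 0 \<longrightarrow> F (\<lambda>i. c * v i) = F v)"

lemma proj_pt_in_pts_where:
  "v \<in> vecs5 \<Longrightarrow> v \<noteq> (\<lambda>_. 0) \<Longrightarrow> F v \<Longrightarrow> proj_pt v \<in> pts_where F"
  unfolding pts_where_def by blast

lemma proj_pt_in_pts_where_iff:
  assumes "homogeneous F" and "v \<in> vecs5" and "v \<noteq> (\<lambda>_. 0)"
  shows "proj_pt v \<in> pts_where F \<longleftrightarrow> F v"
proof
  assume "proj_pt v \<in> pts_where F"
  then obtain w where "proj_pt w = proj_pt v" and "F w"
    unfolding pts_where_def by auto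
  then obtain c where "c \<noteq> 0" and "v = (\<lambda>i. c * w i)"
    using proj_pt_eqD by blast
  with assms(1) \<open>F w\<close> show "F v"
    unfolding homogeneous_def by simp
qed (use assms proj_pt_in_pts_where in blast)

lemma pts_where_diff:
  assumes "homogeneous G"
  shows "pts_where F - pts_where G = pts_where (\<lambda>x. F x \<and> \<not> G x)"
proof (intro equalityI subsetI)
  fix P assume P: "P \<in> pts_where F - pts_where G"
  then obtain v where v: "P = proj_pt v" "v \<in> vecs5" "v \<noteq> (\<lambda>_. 0)" "F v"
    unfolding pts_where_def by blast
  with P have "\<not> G v" using proj_pt_in_pts_where by blast
  with v show "P \<in> pts_where (\<lambda>x. F x \<and> \<not> G x)" unfolding pts_where_def by blast
next
  fix P assume "P \<in> pts_where (\<lambda>x. F x \<and> \<not> G x)"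
  then obtain v where v: "P = proj_pt v" "v \<in> vecs5" "v \<noteq> (\<lambda>_. 0)" "F v" "\<not> G v"
    unfolding pts_where_def by blast
  then have "P \<notin> pts_where G" using proj_pt_in_pts_where_iff[OF assms v(2,3)] by simp
  with v show "P \<in> pts_where F - pts_where G" unfolding pts_where_def by blast
qed

lemma pts_where_Un: "pts_where F \<union> pts_where G = pts_where (\<lambda>x. F x \<or> G x)"
  unfolding pts_where_def by blast

lemma pts_where_cong:
  assumes "\<And>x1 x2 x3 x4 x5. \<not> (x1 = 0 \<and> x2 = 0 \<and> x3 = 0 \<and> x4 = 0 \<and> x5 = 0) \<Longrightarrow>
     F (vec5 x1 x2 x3 x4 x5) \<longleftrightarrow> G (vec5 x1 x2 x3 x4 x5)"
  shows "pts_where F = pts_where G"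
proof -
  have "F v \<longleftrightarrow> G v" if v: "v \<in> vecs5" "v \<noteq> (\<lambda>_. 0)" for v
  proof -
    obtain x1 x2 x3 x4 x5 where "v = vec5 x1 x2 x3 x4 x5"
      and "\<not> (x1 = 0 \<and> x2 = 0 \<and> x3 = 0 \<and> x4 = 0 \<and> x5 = 0)"
      using v by (rule vecs5_nonzeroE)
    then show ?thesis using assms[of x1 x2 x3 x4 x5] by simp
  qed
  then show ?thesis unfolding pts_where_def by blast
qed

lemma card_pts_where:
  assumes "homogeneous F"
    and param: "\<And>x. x \<in> A \<Longrightarrow> g x \<in> vecs5 \<and> g x \<noteq> (\<lambda>_. 0) \<and> F (g x)"
    and onto: "\<And>x1 x2 x3 x4 x5. \<not> (x1 = 0 \<and> x2 = 0 \<and> x3 = 0 \<and> x4 = 0 \<and> x5 = 0) \<Longrightarrow>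
                 F (vec5 x1 x2 x3 x4 x5) \<Longrightarrow>
                 \<exists>x\<in>A. \<exists>c. c \<noteq> 0 \<and> g x = vec5 (c*x1) (c*x2) (c*x3) (c*x4) (c*x5)"
    and inj: "\<And>x y c. x \<in> A \<Longrightarrow> y \<in> A \<Longrightarrow> c \<noteq> 0 \<Longrightarrow> g y = (\<lambda>i. c * g x i) \<Longrightarrow> x = y"
  shows "card (pts_where F) = card A"
proof -
  have "pts_where F = (\<lambda>x. proj_pt (g x)) ` A"
  proof (intro equalityI subsetI)
    fix P assume "P \<in> pts_where F"
    then obtain v where v: "P = proj_pt v" "v \<in> vecs5" "v \<noteq> (\<lambda>_. 0)" "F v"
      unfolding pts_where_def by blast
    obtain x1 x2 x3 x4 x5 where v5: "v = vec5 x1 x2 x3 x4 x5"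
      and "\<not> (x1 = 0 \<and> x2 = 0 \<and> x3 = 0 \<and> x4 = 0 \<and> x5 = 0)"
      using v(2,3) by (rule vecs5_nonzeroE)
    then obtain x c where "x \<in> A" "c \<noteq> 0" and "g x = (\<lambda>i. c * v i)"
      using onto v(4) by (metis smult_vec5)
    then have "proj_pt (g x) = P" using v(1) proj_pt_smult by simp
    with \<open>x \<in> A\<close> show "P \<in> (\<lambda>x. proj_pt (g x)) ` A" by blast
  next
    fix P assume "P \<in> (\<lambda>x. proj_pt (g x)) ` A"
    then show "P \<in> pts_where F" using param unfolding pts_where_def by blast
  qed
  moreover have "inj_on (\<lambda>x. proj_pt (g x)) A"
  proof (rule inj_onI)
    fix x y assume "x \<in> A" "y \<in> A" "proj_pt (g x) = proj_pt (g y)"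
    moreover obtain c where "c \<noteq> 0" "g y = (\<lambda>i. c * g x i)"
      using proj_pt_eqD calculation(3) by blast
    ultimately show "x = y" using inj[of x y c] by blast
  qed
  ultimately show ?thesis by (simp add: card_image)
qed

lemma proj_pt_subset_vecs5: "v \<in> vecs5 \<Longrightarrow> proj_pt v \<subseteq> vecs5"
  by (auto simp: proj_pt_def vecs5_def)

lemma orbit_eq_if_in_orbit:
  assumes comp: "\<And>M M'. M \<in> G \<Longrightarrow> M' \<in> G \<Longrightarrow> \<exists>M''\<in>G. \<forall>v. mat_vec M (mat_vec M' v) = mat_vec M'' v"
    and inv: "\<And>M. M \<in> G \<Longrightarrow> \<exists>M'\<in>G. \<forall>v\<in>vecs5. mat_vec M' (mat_vec M v) = v"
    and "P \<subseteq> vecs5" and "Q \<in> orbit G P"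
  shows "orbit G Q = orbit G P"
proof -
  obtain M where M: "M \<in> G" "Q = act M P"
    using assms(4) unfolding orbit_def by blast
  show ?thesis
  proof (intro equalityI subsetI)
    fix R assume "R \<in> orbit G Q"
    then obtain N where "N \<in> G" "R = act N Q"
      unfolding orbit_def by blast
    moreover obtain K where "K \<in> G" "\<forall>v. mat_vec N (mat_vec M v) = mat_vec K v"
      using comp[OF \<open>N \<in> G\<close> M(1)] by blast
    ultimately have "R = act K P"
      using M(2) unfolding act_def by (simp add: image_image)
    with \<open>K \<in> G\<close> show "R \<in> orbit G P" unfolding orbit_def by blast
  next
    fix R assume "R \<in> orbit G P"
    then obtain N where "N \<in> G" "R = act N P"
      unfolding orbit_def by blast
    obtain M' where "M' \<in> G" and M': "\<forall>v\<in>vecs5. mat_vec M' (mat_vec M v) = v"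
      using inv[OF M(1)] by blast
    obtain K where "K \<in> G" and K: "\<forall>v. mat_vec N (mat_vec M' v) = mat_vec K v"
      using comp[OF \<open>N \<in> G\<close> \<open>M' \<in> G\<close>] by blast
    have "act K Q = (\<lambda>v. mat_vec N (mat_vec M' (mat_vec M v))) ` P"
      using M(2) K unfolding act_def by (simp add: image_image)
    also have "\<dots> = act N P"
      unfolding act_def using M' assms(3) by (intro image_cong) auto
    finally show "R \<in> orbit G Q"
      using \<open>K \<in> G\<close> \<open>R = act N P\<close> unfolding orbit_def by blast
  qed
qed

section \<open>Fields of characteristic 2\<close>

lemma two_eq_zero_if_card_power_of_two:
  assumes "CARD('a::{field,finite}) = 2 ^ h"
  shows "(2::'a) = 0"
proof -
  have p: "prime CHAR('a)"
    by (rule prime_CHAR_semidom) (simp add: finite_imp_CHAR_pos)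
  have "CHAR('a) dvd 2 ^ h" using CHAR_dvd_CARD[where 'a='a] assms by simp
  then have "CHAR('a) dvd 2" using p prime_dvd_power by blast
  then have "CHAR('a) = 2" using p by (metis primes_dvd_imp_eq two_is_prime_nat)
  then show ?thesis by (metis of_nat_CHAR of_nat_numeral)
qed

lemma minus_eq_self_if_two_eq_zero:
  assumes "(2::'a::ring_1) = 0"
  shows "- x = (x::'a)"
proof -
  have "x + x = 0" using assms by (metis mult_2 mult_zero_left)
  then show ?thesis using neg_eq_iff_add_eq_0 by blast
qed

text \<open>In characteristic 2 squaring is additive, hence injective, hence onto a finite field.\<close>
lemma exists_sqrt_if_two_eq_zero:
  assumes "(2::'a::{field,finite}) = 0"
  shows "\<exists>y. y * y = (x::'a)"
proof -
  have "inj (\<lambda>y::'a. y * y)"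
  proof (rule injI)
    fix y z :: 'a assume "y * y = z * z"
    have "(y - z) * (y - z) = y * y + z * z - 2 * (y * z)"
      by (simp add: algebra_simps mult_2)
    also have "\<dots> = 0"
      using \<open>y * y = z * z\<close> assms by (simp add: mult_2[of "z * z", symmetric])
    finally show "y = z" by simp
  qed
  then have "surj (\<lambda>y::'a. y * y)"
    using finite_UNIV_inj_surj[OF finite_class.finite_UNIV] by blast
  from surjD[OF this, of x] show ?thesis by auto
qed

abbreviation norm_form :: "'a::comm_ring_1 \<Rightarrow> 'a \<Rightarrow> 'a \<Rightarrow> 'a" where
  "norm_form \<alpha> x y \<equiv> x^2 + x*y + \<alpha>*y^2"

lemma norm_form_eq_zero_iff:
  fixes \<alpha> :: "'a::field"
  assumes "irreducible [:\<alpha>, 1, 1:]"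
  shows "norm_form \<alpha> x y = 0 \<longleftrightarrow> x = 0 \<and> y = 0"
proof (cases "y = 0")
  case False
  show ?thesis
  proof
    assume "norm_form \<alpha> x y = 0"
    define t where "t = x / y"
    have "t^2 + t + \<alpha> = 0"
      using \<open>norm_form \<alpha> x y = 0\<close> False unfolding t_def by (simp add: field_simps power2_eq_square)
    then have "poly [:\<alpha>, 1, 1:] t = 0" by (simp add: algebra_simps power2_eq_square)
    then have "[:-t, 1:] dvd [:\<alpha>, 1, 1:]" using poly_eq_0_iff_dvd by blast
    then obtain r where r: "[:\<alpha>, 1, 1:] = [:-t, 1:] * r" by (rule dvdE)
    then have "r \<noteq> 0" by auto
    have "degree [:\<alpha>, 1, 1:] = degree [:-t, 1:] + degree r"
      unfolding r by (rule degree_mult_eq) (use \<open>r \<noteq> 0\<close> in auto)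
    then have "degree r = 1" by simp
    moreover have "is_unit [:-t, 1:] \<or> is_unit r" using assms r irreducibleD by metis
    ultimately show "x = 0 \<and> y = 0" using \<open>r \<noteq> 0\<close> by (auto simp: is_unit_iff_degree)
  qed simp
qed simp

lemma norm_form_normalize:
  fixes \<alpha> :: "'a::{field,finite}"
  assumes "(2::'a) = 0" and "irreducible [:\<alpha>, 1, 1:]" and "x \<noteq> 0 \<or> y \<noteq> 0"
  obtains t where "t \<noteq> 0" and "norm_form \<alpha> (x / t) (y / t) = 1"
proof -
  obtain t where t: "t * t = norm_form \<alpha> x y"
    using exists_sqrt_if_two_eq_zero[OF assms(1)] by blast
  have "norm_form \<alpha> x y \<noteq> 0" using assms(2,3) norm_form_eq_zero_iff by blast
  with t have "t \<noteq> 0" by auto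
  have "norm_form \<alpha> (x / t) (y / t) = norm_form \<alpha> x y / (t * t)"
    by (simp add: power2_eq_square add_divide_distrib)
  also have "\<dots> = 1" using t \<open>norm_form \<alpha> x y \<noteq> 0\<close> by simp
  finally show ?thesis using that \<open>t \<noteq> 0\<close> by blast
qed

lemma norm_form_solve:
  fixes c d :: "'a::comm_ring_1"
  assumes "norm_form \<alpha> c d = 1" and "P * d = Q * c"
  shows "\<exists>b. b * c = P \<and> b * d = Q"
proof (intro exI conjI)
  have "(P * (c + d) + \<alpha> * Q * d) * c = P * norm_form \<alpha> c d + \<alpha> * d * (Q * c - P * d)"
    by (simp add: algebra_simps power2_eq_square)
  then show "(P * (c + d) + \<alpha> * Q * d) * c = P" using assms by simp
  have "(P * (c + d) + \<alpha> * Q * d) * d = Q * norm_form \<alpha> c d + (c + d) * (P * d - Q * c)"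
    by (simp add: algebra_simps power2_eq_square)
  then show "(P * (c + d) + \<alpha> * Q * d) * d = Q" using assms by simp
qed

section \<open>The group\<close>

lemma Mabcd_in_Ggrp [intro]: "a \<noteq> 0 \<Longrightarrow> norm_form \<alpha> c d = 1 \<Longrightarrow> Mabcd \<alpha> a b c d \<in> Ggrp \<alpha>"
  unfolding Ggrp_def by blast

lemma GgrpE [elim]:
  assumes "M \<in> Ggrp \<alpha>"
  obtains a b c d where "M = Mabcd \<alpha> a b c d" and "a \<noteq> 0" and "norm_form \<alpha> c d = 1"
  using assms unfolding Ggrp_def by blast

lemma mat_vec_Mabcd_Mabcd:
  fixes a :: "'a::field"
  assumes "a \<noteq> 0" and "a' \<noteq> 0"
  shows "mat_vec (Mabcd \<alpha> a b c d) (mat_vec (Mabcd \<alpha> a' b' c' d') v) =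
    mat_vec (Mabcd \<alpha> (a*a') (a*b' + b*inverse a') (c*c' + \<alpha>*d*d') (c*d' + d*c' + d*d')) v"
  unfolding mat_vec_Mabcd vec5_apply vec5_eq_iff inverse_mult_distrib
  using assms by (simp add: algebra_simps)

lemma mat_vec_Mabcd_1_0_1_0: "v \<in> vecs5 \<Longrightarrow> mat_vec (Mabcd \<alpha> 1 0 1 0) v = v"
  by (subst (2) vecs5_eq_vec5) (simp_all add: mat_vec_Mabcd)

text \<open>In characteristic 2 this is the multiplicativity of the norm of GF(q^2) over GF(q).\<close>
lemma norm_form_mult:
  fixes c :: "'a::comm_ring_1"
  assumes "(2::'a) = 0"
  shows "norm_form \<alpha> (c*c' + \<alpha>*d*d') (c*d' + d*c' + d*d') = norm_form \<alpha> c d * norm_form \<alpha> c' d'"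
proof -
  have "norm_form \<alpha> (c*c' + \<alpha>*d*d') (c*d' + d*c' + d*d') = norm_form \<alpha> c d * norm_form \<alpha> c' d' +
      2 * (- \<alpha>*d^2*norm_form \<alpha> c' d' - \<alpha>*d'^2*norm_form \<alpha> c d + 2*\<alpha>^2*d^2*d'^2
           + \<alpha>*(c*d' + d*c' + d*d')^2)"
    by (simp add: algebra_simps power2_eq_square mult_2)
  then show ?thesis using assms by simp
qed

lemma Ggrp_comp:
  fixes \<alpha> :: "'a::field"
  assumes "(2::'a) = 0" and "M \<in> Ggrp \<alpha>" and "M' \<in> Ggrp \<alpha>"
  shows "\<exists>M''\<in>Ggrp \<alpha>. \<forall>v. mat_vec M (mat_vec M' v) = mat_vec M'' v"
proof -
  obtain a b c d where M: "M = Mabcd \<alpha> a b c d" "a \<noteq> 0" "norm_form \<alpha> c d = 1"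
    using assms(2) by blast
  obtain a' b' c' d' where M': "M' = Mabcd \<alpha> a' b' c' d'" "a' \<noteq> 0" "norm_form \<alpha> c' d' = 1"
    using assms(3) by blast
  have "Mabcd \<alpha> (a*a') (a*b' + b*inverse a') (c*c' + \<alpha>*d*d') (c*d' + d*c' + d*d') \<in> Ggrp \<alpha>"
    using M M' norm_form_mult[OF assms(1)] by auto
  with M M' mat_vec_Mabcd_Mabcd show ?thesis by blast
qed

lemma Ggrp_inverse:
  fixes \<alpha> :: "'a::field"
  assumes "(2::'a) = 0" and "M \<in> Ggrp \<alpha>"
  shows "\<exists>M'\<in>Ggrp \<alpha>. \<forall>v\<in>vecs5. mat_vec M' (mat_vec M v) = v"
proof -
  obtain a b c d where M: "M = Mabcd \<alpha> a b c d" "a \<noteq> 0" "norm_form \<alpha> c d = 1"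
    using assms(2) by blast
  have "norm_form \<alpha> (c + d) d = norm_form \<alpha> c d + 2 * (c*d + d*d)"
    by (simp add: algebra_simps power2_eq_square mult_2)
  then have "Mabcd \<alpha> (inverse a) (- b) (c + d) d \<in> Ggrp \<alpha>"
    using M assms(1) by auto
  moreover have "mat_vec (Mabcd \<alpha> (inverse a) (- b) (c + d) d) (mat_vec M v) = v" if "v \<in> vecs5" for v
  proof -
    have "(c+d)*c + \<alpha>*d*d = norm_form \<alpha> c d" "(c+d)*d + d*c + d*d = 2 * (c*d + d*d)"
      by (simp_all add: algebra_simps power2_eq_square mult_2)
    then show ?thesis
      using M assms(1) mat_vec_Mabcd_Mabcd[of "inverse a" a \<alpha> "- b" "c + d" d b c d v]
        mat_vec_Mabcd_1_0_1_0[OF that] by simp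
  qed
  ultimately show ?thesis by blast
qed

lemma Ggrp_invariant_iff:
  fixes \<alpha> :: "'a::field"
  assumes "(2::'a) = 0" and "\<And>M v. M \<in> Ggrp \<alpha> \<Longrightarrow> P v \<Longrightarrow> P (mat_vec M v)"
    and "M \<in> Ggrp \<alpha>" and "v \<in> vecs5"
  shows "P (mat_vec M v) \<longleftrightarrow> P v"
proof
  obtain M' where "M' \<in> Ggrp \<alpha>" "mat_vec M' (mat_vec M v) = v"
    using Ggrp_inverse[OF assms(1,3)] assms(4) by blast
  then show "P (mat_vec M v) \<Longrightarrow> P v" using assms(2) by metis
qed (use assms(2,3) in blast)

lemma mat_vec_Ggrp_eq_zero_iff:
  fixes \<alpha> :: "'a::field"
  assumes "(2::'a) = 0" and "M \<in> Ggrp \<alpha>" and "v \<in> vecs5"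
  shows "mat_vec M v = (\<lambda>_. 0) \<longleftrightarrow> v = (\<lambda>_. 0)"
  by (rule Ggrp_invariant_iff[OF assms(1) _ assms(2,3)]) (simp add: mat_vec_zero)

lemma mat_vec_Ggrp_1: "M \<in> Ggrp \<alpha> \<Longrightarrow> mat_vec M v 1 = v 1"
  by (erule GgrpE) (simp add: mat_vec_Mabcd)

definition quad_form :: "(nat \<Rightarrow> 'a::comm_ring_1) \<Rightarrow> 'a" where
  "quad_form x = x 2 * x 5 + x 3 * x 4"

lemma quad_form_smult: "quad_form (\<lambda>i. c * x i) = c^2 * quad_form x"
  unfolding quad_form_def power2_eq_square by (simp add: algebra_simps)

lemma quad_form_Mabcd_coords:
  fixes a :: "'a::field"
  assumes "a * ia = 1" and "(2::'a) = 0" and "norm_form \<alpha> c d = 1"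
  shows "(a*c*x2 + \<alpha>*a*d*x3 + b*c*x4 + \<alpha>*b*d*x5) * (ia*d*x4 + ia*(c+d)*x5) +
         (a*d*x2 + a*(c+d)*x3 + b*d*x4 + b*(c+d)*x5) * (ia*c*x4 + \<alpha>*ia*d*x5) = x2*x5 + x3*x4"
proof -
  have "(a*c*x2 + \<alpha>*a*d*x3 + b*c*x4 + \<alpha>*b*d*x5) * (ia*d*x4 + ia*(c+d)*x5) +
         (a*d*x2 + a*(c+d)*x3 + b*d*x4 + b*(c+d)*x5) * (ia*c*x4 + \<alpha>*ia*d*x5)
    = a*ia*(norm_form \<alpha> c d * (x2*x5 + x3*x4) + 2*(c*d*x2*x4 + \<alpha>*d*(c+d)*x3*x5))
      + 2*(b*ia*(c*x4 + \<alpha>*d*x5)*(d*x4 + (c+d)*x5))"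
    by (simp add: algebra_simps power2_eq_square mult_2)
  then show ?thesis using assms by simp
qed

lemma quad_form_mat_vec_Ggrp:
  fixes \<alpha> :: "'a::field"
  assumes "(2::'a) = 0" and "M \<in> Ggrp \<alpha>"
  shows "quad_form (mat_vec M v) = quad_form v"
  using assms(2)
proof (rule GgrpE)
  fix a b c d assume "M = Mabcd \<alpha> a b c d" "a \<noteq> 0" "norm_form \<alpha> c d = 1"
  then show ?thesis
    using quad_form_Mabcd_coords[of a "inverse a", OF _ assms(1)]
    by (simp add: mat_vec_Mabcd quad_form_def)
qed

lemma mat_vec_Ggrp_coords_zero_iff:
  fixes \<alpha> :: "'a::field"
  assumes "(2::'a) = 0" and "M \<in> Ggrp \<alpha>" and "v \<in> vecs5"
  shows "mat_vec M v 4 = 0 \<and> mat_vec M v 5 = 0 \<longleftrightarrow> v 4 = 0 \<and> v 5 = 0"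
    and "mat_vec M v 2 = 0 \<and> mat_vec M v 3 = 0 \<and> mat_vec M v 4 = 0 \<and> mat_vec M v 5 = 0 \<longleftrightarrow>
         v 2 = 0 \<and> v 3 = 0 \<and> v 4 = 0 \<and> v 5 = 0"
  by (rule Ggrp_invariant_iff[OF assms(1) _ assms(2,3)], erule GgrpE, simp add: mat_vec_Mabcd)+

section \<open>Strata and orbits\<close>

text \<open>Quadric 0 collects the points of the cone C off the plane and off H; for lam \<noteq> 0,
  Quadric lam collects the points of the parabolic quadric Q_lam off H.\<close>
datatype 'a stratum = Vertex | Line | Plane | Hyperbolic | Solid | Quadric 'a

definition stratum :: "(nat \<Rightarrow> 'a::field) \<Rightarrow> 'a stratum" where
  "stratum x =
    (if x 4 = 0 \<and> x 5 = 0 then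
       (if x 2 = 0 \<and> x 3 = 0 then Vertex else if x 1 = 0 then Line else Plane)
     else if x 1 = 0 then (if quad_form x = 0 then Hyperbolic else Solid)
     else Quadric (- quad_form x / (x 1)^2))"

definition stratum_pts :: "'a::field stratum \<Rightarrow> (nat \<Rightarrow> 'a) set set" where
  "stratum_pts S = pts_where (\<lambda>x. stratum x = S)"

lemma stratum_smult: "c \<noteq> 0 \<Longrightarrow> stratum (\<lambda>i. c * x i) = stratum x"
  by (simp add: stratum_def quad_form_smult power_mult_distrib)

lemma homogeneous_stratum: "homogeneous (\<lambda>x. P (stratum x))"
  by (simp add: homogeneous_def stratum_smult)

lemma stratum_mat_vec_Ggrp:
  fixes \<alpha> :: "'a::field"
  assumes "(2::'a) = 0" and "M \<in> Ggrp \<alpha>" and "v \<in> vecs5"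
  shows "stratum (mat_vec M v) = stratum v"
  using mat_vec_Ggrp_coords_zero_iff[OF assms] mat_vec_Ggrp_1[OF assms(2)]
    quad_form_mat_vec_Ggrp[OF assms(1,2)]
  by (cases "v 4 = 0 \<and> v 5 = 0") (auto simp: stratum_def)

fun stratum_rep :: "'a::field stratum \<Rightarrow> nat \<Rightarrow> 'a" where
  "stratum_rep Vertex = vec5 1 0 0 0 0"
| "stratum_rep Line = vec5 0 1 0 0 0"
| "stratum_rep Plane = vec5 1 1 0 0 0"
| "stratum_rep Hyperbolic = vec5 0 0 0 1 0"
| "stratum_rep Solid = vec5 0 0 1 1 0"
| "stratum_rep (Quadric lam) = vec5 1 0 (- lam) 1 0"

lemma stratum_rep_in_vecs5 [simp]: "stratum_rep S \<in> vecs5"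
  by (cases S) simp_all

lemma stratum_rep_nonzero: "stratum_rep S \<noteq> (\<lambda>_. 0)"
  by (cases S) (simp_all add: vec5_eq_zero_iff)

lemma stratum_stratum_rep [simp]: "stratum (stratum_rep S) = S"
  by (cases S) (simp_all add: stratum_def quad_form_def)

lemma proj_pt_stratum_rep_in_stratum_pts: "proj_pt (stratum_rep S) \<in> stratum_pts S"
  unfolding stratum_pts_def by (rule proj_pt_in_pts_where) (simp_all add: stratum_rep_nonzero)

lemma inj_stratum_pts: "inj stratum_pts"
proof (rule injI)
  fix S S' :: "'a stratum" assume "stratum_pts S = stratum_pts S'"
  with proj_pt_stratum_rep_in_stratum_pts[of S]
  have "proj_pt (stratum_rep S) \<in> pts_where (\<lambda>x. stratum x = S')"
    by (simp add: stratum_pts_def)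
  then have "stratum (stratum_rep S) = S'"
    using proj_pt_in_pts_where_iff[OF homogeneous_stratum[of "\<lambda>T. T = S'"]
        stratum_rep_in_vecs5 stratum_rep_nonzero] by blast
  then show "S = S'" by simp
qed

lemma card_UNIV_stratum: "CARD('a::finite stratum) = CARD('a) + 5"
proof -
  have "S \<in> {Vertex, Line, Plane, Hyperbolic, Solid} \<union> range Quadric" for S :: "'a stratum"
    by (cases S) simp_all
  then have U: "(UNIV :: 'a stratum set) = {Vertex, Line, Plane, Hyperbolic, Solid} \<union> range Quadric"
    by blast
  have "card (range (Quadric :: 'a \<Rightarrow> 'a stratum)) = CARD('a)"
    by (rule card_image) (simp add: inj_on_def)
  then show ?thesis by (subst U, subst card_Un_disjoint) auto
qed

lemma Ggrp_reaches_plane: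
  fixes \<alpha> :: "'a::{field,finite}"
  assumes "(2::'a) = 0" and "irreducible [:\<alpha>, 1, 1:]" and "x2 \<noteq> 0 \<or> x3 \<noteq> 0" and "s \<noteq> 0"
  shows "\<exists>M\<in>Ggrp \<alpha>. mat_vec M (vec5 e 1 0 0 0) = (\<lambda>i. inverse s * vec5 (s * e) x2 x3 0 0 i)"
proof -
  obtain t where t: "t \<noteq> 0" "norm_form \<alpha> (x2 / t) (x3 / t) = 1"
    using norm_form_normalize[OF assms(1-3)] by blast
  have "mat_vec (Mabcd \<alpha> (t / s) 0 (x2 / t) (x3 / t)) (vec5 e 1 0 0 0) =
      (\<lambda>i. inverse s * vec5 (s * e) x2 x3 0 0 i)"
    unfolding smult_vec5 using t(1) assms(4) by (simp add: mat_vec_Mabcd vec5_eq_iff field_simps)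
  moreover have "Mabcd \<alpha> (t / s) 0 (x2 / t) (x3 / t) \<in> Ggrp \<alpha>"
    using t assms(4) by auto
  ultimately show ?thesis by blast
qed

lemma Ggrp_reaches_off_plane:
  fixes \<alpha> :: "'a::{field,finite}"
  assumes two: "(2::'a) = 0" and irr: "irreducible [:\<alpha>, 1, 1:]"
    and "x4 \<noteq> 0 \<or> x5 \<noteq> 0" and s: "s \<noteq> 0" and q: "x2 * x5 + x3 * x4 = u * s^2"
  shows "\<exists>M\<in>Ggrp \<alpha>. mat_vec M (vec5 e 0 u 1 0) = (\<lambda>i. inverse s * vec5 (s * e) x2 x3 x4 x5 i)"
proof -
  obtain t where t: "t \<noteq> 0" "norm_form \<alpha> (x4 / t) (x5 / t) = 1"
    using norm_form_normalize[OF two irr assms(3)] by blast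
  define a c d where "a = s / t" and "c = x4 / t" and "d = x5 / t"
  \<comment> \<open>It remains to solve b c = P and b d = Q for b; this system is consistent precisely
    because the target vector has quadratic form u s^2.\<close>
  define P Q where "P = x2 / s - \<alpha> * a * d * u" and "Q = x3 / s - a * (c + d) * u"
  have "(x2 / s) * d + (x3 / s) * c = a * u"
  proof -
    have "(x2 / s) * d + (x3 / s) * c = (x2 * x5 + x3 * x4) / (s * t)"
      unfolding c_def d_def using s t(1) by (simp add: field_simps)
    also have "\<dots> = a * u" unfolding q a_def using s t(1) by (simp add: field_simps power2_eq_square)
    finally show ?thesis .
  qed
  moreover have "P * d + Q * c = (x2 / s) * d + (x3 / s) * c - a * u * norm_form \<alpha> c d"
    unfolding P_def Q_def by (simp add: algebra_simps power2_eq_square)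
  ultimately have "P * d + Q * c = 0" using t(2) unfolding c_def d_def by simp
  then have "P * d = - (Q * c)" by (simp add: eq_neg_iff_add_eq_0)
  also have "\<dots> = Q * c" by (rule minus_eq_self_if_two_eq_zero[OF two])
  finally have "P * d = Q * c" .
  then obtain b where b: "b * c = P" "b * d = Q"
    using norm_form_solve t(2) unfolding c_def d_def by blast
  have "\<alpha> * a * d * u + b * c = inverse s * x2" "a * (c + d) * u + b * d = inverse s * x3"
    using b unfolding P_def Q_def by (simp_all add: divide_inverse_commute)
  moreover have "inverse a * c = inverse s * x4" "inverse a * d = inverse s * x5"
    using s t(1) unfolding a_def c_def d_def by (simp_all add: field_simps)
  ultimately have "mat_vec (Mabcd \<alpha> a b c d) (vec5 e 0 u 1 0) =
      (\<lambda>i. inverse s * vec5 (s * e) x2 x3 x4 x5 i)"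
    using s by (simp add: mat_vec_Mabcd smult_vec5 vec5_eq_iff)
  moreover have "Mabcd \<alpha> a b c d \<in> Ggrp \<alpha>"
    using s t unfolding a_def c_def d_def by auto
  ultimately show ?thesis by blast
qed

lemma proj_pt_in_orbitI:
  assumes "M \<in> G" and "c \<noteq> 0" and "mat_vec M w = (\<lambda>i. c * v i)"
  shows "proj_pt v \<in> orbit G (proj_pt w)"
proof -
  have "act M (proj_pt w) = proj_pt v"
    using assms(2,3) by (simp add: act_proj_pt proj_pt_smult)
  with assms(1) show ?thesis unfolding orbit_def by blast
qed

lemma stratum_rep_plane:
  fixes x1 :: "'a::field"
  assumes "x4 = 0 \<and> x5 = 0" and "x2 \<noteq> 0 \<or> x3 \<noteq> 0"
  obtains e s where "stratum_rep (stratum (vec5 x1 x2 x3 x4 x5)) = vec5 e 1 0 0 0"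
    and "s \<noteq> 0" and "s * e = x1"
proof (cases "x1 = 0")
  case True
  then show ?thesis using assms by (intro that[of 0 1]) (auto simp: stratum_def)
next
  case False
  then show ?thesis using assms by (intro that[of 1 x1]) (auto simp: stratum_def)
qed

lemma stratum_rep_off_plane:
  fixes x1 :: "'a::{field,finite}"
  assumes two: "(2::'a) = 0" and "x4 \<noteq> 0 \<or> x5 \<noteq> 0"
  obtains e u s where "stratum_rep (stratum (vec5 x1 x2 x3 x4 x5)) = vec5 e 0 u 1 0"
    and "s \<noteq> 0" and "s * e = x1" and "x2 * x5 + x3 * x4 = u * s^2"
proof -
  let ?v = "vec5 x1 x2 x3 x4 x5"
  have qf: "quad_form ?v = x2 * x5 + x3 * x4" unfolding quad_form_def by simp
  consider (hyperbolic) "x1 = 0" "quad_form ?v = 0" | (solid) "x1 = 0" "quad_form ?v \<noteq> 0"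
    | (quadric) "x1 \<noteq> 0"
    by blast
  then show ?thesis
  proof cases
    case hyperbolic
    have "stratum_rep (stratum ?v) = vec5 0 0 0 1 0"
      using hyperbolic assms(2) by (auto simp: stratum_def)
    then show ?thesis
      by (rule that[of 0 0 1]) (use hyperbolic qf in simp_all)
  next
    case solid
    obtain s where s: "s * s = quad_form ?v"
      using exists_sqrt_if_two_eq_zero[OF two] by blast
    have "stratum_rep (stratum ?v) = vec5 0 0 1 1 0"
      using solid assms(2) by (auto simp: stratum_def)
    then show ?thesis
      by (rule that[of 0 1 s]) (use solid qf s in \<open>auto simp: power2_eq_square\<close>)
  next
    case quadric
    have "stratum_rep (stratum ?v) = vec5 1 0 (quad_form ?v / x1^2) 1 0"
      using quadric assms(2) by (auto simp: stratum_def)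
    then show ?thesis
      by (rule that[of 1 "quad_form ?v / x1^2" x1]) (use quadric qf in simp_all)
  qed
qed

lemma Ggrp_reaches_stratum:
  fixes \<alpha> :: "'a::{field,finite}"
  assumes two: "(2::'a) = 0" and irr: "irreducible [:\<alpha>, 1, 1:]"
    and "v \<in> vecs5" and "v \<noteq> (\<lambda>_. 0)"
  shows "proj_pt v \<in> orbit (Ggrp \<alpha>) (proj_pt (stratum_rep (stratum v)))"
proof -
  obtain x1 x2 x3 x4 x5 where v: "v = vec5 x1 x2 x3 x4 x5"
    and nz: "\<not> (x1 = 0 \<and> x2 = 0 \<and> x3 = 0 \<and> x4 = 0 \<and> x5 = 0)"
    using assms(3,4) by (rule vecs5_nonzeroE)
  consider (vertex) "x2 = 0 \<and> x3 = 0 \<and> x4 = 0 \<and> x5 = 0"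
    | (plane) "x4 = 0 \<and> x5 = 0" "x2 \<noteq> 0 \<or> x3 \<noteq> 0"
    | (off_plane) "x4 \<noteq> 0 \<or> x5 \<noteq> 0"
    by blast
  then show ?thesis
  proof cases
    case vertex
    then have "x1 \<noteq> 0" "stratum_rep (stratum v) = vec5 1 0 0 0 0"
      using nz by (auto simp: v stratum_def)
    then show ?thesis
      using vertex by (intro proj_pt_in_orbitI[of "Mabcd \<alpha> 1 0 1 0" _ "inverse x1"])
        (auto simp: mat_vec_Mabcd v smult_vec5)
  next
    case plane
    obtain e s :: 'a where rep: "stratum_rep (stratum v) = vec5 e 1 0 0 0"
      and "s \<noteq> 0" and "s * e = x1"
      using stratum_rep_plane[OF plane] unfolding v .
    obtain M where "M \<in> Ggrp \<alpha>"
      and "mat_vec M (vec5 e 1 0 0 0) = (\<lambda>i. inverse s * vec5 (s * e) x2 x3 0 0 i)"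
      using Ggrp_reaches_plane[OF two irr plane(2) \<open>s \<noteq> 0\<close>] by blast
    then show ?thesis
      unfolding rep using plane \<open>s \<noteq> 0\<close> \<open>s * e = x1\<close>
      by (intro proj_pt_in_orbitI[of M]) (simp_all add: v)
  next
    case off_plane
    obtain e u s :: 'a where rep: "stratum_rep (stratum v) = vec5 e 0 u 1 0"
      and "s \<noteq> 0" and "s * e = x1" and q: "x2 * x5 + x3 * x4 = u * s^2"
      using stratum_rep_off_plane[OF two off_plane] unfolding v .
    obtain M where "M \<in> Ggrp \<alpha>"
      and "mat_vec M (vec5 e 0 u 1 0) = (\<lambda>i. inverse s * vec5 (s * e) x2 x3 x4 x5 i)"
      using Ggrp_reaches_off_plane[OF two irr off_plane \<open>s \<noteq> 0\<close> q] by blast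
    then show ?thesis
      unfolding rep using \<open>s \<noteq> 0\<close> \<open>s * e = x1\<close>
      by (intro proj_pt_in_orbitI[of M]) (simp_all add: v)
  qed
qed

lemma orbit_Ggrp_proj_pt:
  fixes \<alpha> :: "'a::{field,finite}"
  assumes two: "(2::'a) = 0" and irr: "irreducible [:\<alpha>, 1, 1:]"
    and "v \<in> vecs5" and "v \<noteq> (\<lambda>_. 0)"
  shows "orbit (Ggrp \<alpha>) (proj_pt v) = stratum_pts (stratum v)"
proof (intro equalityI subsetI)
  fix Q assume "Q \<in> orbit (Ggrp \<alpha>) (proj_pt v)"
  then obtain M where M: "M \<in> Ggrp \<alpha>" and Q: "Q = proj_pt (mat_vec M v)"
    unfolding orbit_def act_proj_pt by blast
  have "proj_pt (mat_vec M v) \<in> pts_where (\<lambda>x. stratum x = stratum v)"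
    using assms mat_vec_Ggrp_eq_zero_iff[OF two M] stratum_mat_vec_Ggrp[OF two M]
    by (intro proj_pt_in_pts_where) simp_all
  then show "Q \<in> stratum_pts (stratum v)" unfolding Q stratum_pts_def .
next
  fix Q assume "Q \<in> stratum_pts (stratum v)"
  then obtain w where Q: "Q = proj_pt w" and w: "w \<in> vecs5" "w \<noteq> (\<lambda>_. 0)"
    and "stratum w = stratum v"
    unfolding stratum_pts_def pts_where_def by blast
  let ?R = "proj_pt (stratum_rep (stratum v))"
  have "Q \<in> orbit (Ggrp \<alpha>) ?R"
    using Ggrp_reaches_stratum[OF two irr w] \<open>stratum w = stratum v\<close> by (simp add: Q)
  also have "orbit (Ggrp \<alpha>) ?R = orbit (Ggrp \<alpha>) (proj_pt v)"
    by (rule orbit_eq_if_in_orbit[symmetric, OF Ggrp_comp[OF two] Ggrp_inverse[OF two]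
          proj_pt_subset_vecs5[OF stratum_rep_in_vecs5] Ggrp_reaches_stratum[OF two irr assms(3,4)]])
  finally show "Q \<in> orbit (Ggrp \<alpha>) (proj_pt v)" .
qed

lemma orbits_Ggrp:
  fixes \<alpha> :: "'a::{field,finite}"
  assumes two: "(2::'a) = 0" and irr: "irreducible [:\<alpha>, 1, 1:]"
  shows "orbits (Ggrp \<alpha>) = range stratum_pts"
proof (intro equalityI subsetI)
  fix X assume "X \<in> orbits (Ggrp \<alpha>)"
  then obtain v where "v \<in> vecs5" "v \<noteq> (\<lambda>_. 0)" "X = orbit (Ggrp \<alpha>) (proj_pt v)"
    unfolding orbits_def PG4_def pts_where_def by blast
  then show "X \<in> range stratum_pts" using orbit_Ggrp_proj_pt[OF two irr] by simp
next
  fix X :: "(nat \<Rightarrow> 'a) set set" assume "X \<in> range stratum_pts"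
  then obtain S where "X = stratum_pts S" by blast
  then have "X = orbit (Ggrp \<alpha>) (proj_pt (stratum_rep S))"
    using orbit_Ggrp_proj_pt[OF two irr stratum_rep_in_vecs5 stratum_rep_nonzero] by simp
  moreover have "proj_pt (stratum_rep S) \<in> PG4"
    unfolding PG4_def by (rule proj_pt_in_pts_where) (simp_all add: stratum_rep_nonzero)
  ultimately show "X \<in> orbits (Ggrp \<alpha>)" unfolding orbits_def by blast
qed

section \<open>Counting points\<close>

lemma stratum_vec5_eq_iff:
  fixes x1 :: "'a::field"
  shows "stratum (vec5 x1 x2 x3 x4 x5) = Vertex \<longleftrightarrow> x2 = 0 \<and> x3 = 0 \<and> x4 = 0 \<and> x5 = 0"
    and "stratum (vec5 x1 x2 x3 x4 x5) = Line \<longleftrightarrow> x1 = 0 \<and> x4 = 0 \<and> x5 = 0 \<and> (x2 \<noteq> 0 \<or> x3 \<noteq> 0)"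
    and "stratum (vec5 x1 x2 x3 x4 x5) = Plane \<longleftrightarrow> x1 \<noteq> 0 \<and> x4 = 0 \<and> x5 = 0 \<and> (x2 \<noteq> 0 \<or> x3 \<noteq> 0)"
    and "stratum (vec5 x1 x2 x3 x4 x5) = Hyperbolic \<longleftrightarrow>
           x1 = 0 \<and> (x4 \<noteq> 0 \<or> x5 \<noteq> 0) \<and> x2 * x5 + x3 * x4 = 0"
    and "stratum (vec5 x1 x2 x3 x4 x5) = Solid \<longleftrightarrow> x1 = 0 \<and> x2 * x5 + x3 * x4 \<noteq> 0"
    and "stratum (vec5 x1 x2 x3 x4 x5) = Quadric lam \<longleftrightarrow>
           x1 \<noteq> 0 \<and> (x4 \<noteq> 0 \<or> x5 \<noteq> 0) \<and> x2 * x5 + x3 * x4 + lam * x1^2 = 0"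
proof -
  have "- (x2 * x5 + x3 * x4) / x1^2 = lam \<longleftrightarrow> x2 * x5 + x3 * x4 + lam * x1^2 = 0" if "x1 \<noteq> 0"
    using that by (auto simp: field_simps neg_eq_iff_add_eq_0)
  then show "stratum (vec5 x1 x2 x3 x4 x5) = Quadric lam \<longleftrightarrow>
      x1 \<noteq> 0 \<and> (x4 \<noteq> 0 \<or> x5 \<noteq> 0) \<and> x2 * x5 + x3 * x4 + lam * x1^2 = 0"
    by (auto simp: stratum_def quad_form_def)
qed (auto simp: stratum_def quad_form_def)

definition strata_pts :: "'a::field stratum set \<Rightarrow> (nat \<Rightarrow> 'a) set set" where
  "strata_pts A = pts_where (\<lambda>x. stratum x \<in> A)"

lemma strata_pts_singleton: "strata_pts {S} = stratum_pts S"
  by (simp add: strata_pts_def stratum_pts_def)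

lemma strata_pts_Un: "strata_pts A \<union> strata_pts B = strata_pts (A \<union> B)"
  by (simp add: strata_pts_def pts_where_Un)

lemma strata_pts_diff: "strata_pts A - strata_pts B = strata_pts (A - B)"
  unfolding strata_pts_def by (subst pts_where_diff[OF homogeneous_stratum]) simp

lemma singleton_ptN_eq_stratum_pts: "{ptN} = stratum_pts Vertex"
proof -
  have N: "ptN = proj_pt (stratum_rep Vertex)"
    unfolding ptN_def by (rule arg_cong[where f = proj_pt]) (simp add: vec5_def fun_eq_iff)
  show ?thesis
  proof (intro equalityI subsetI)
    fix P assume "P \<in> {ptN}"
    then show "P \<in> stratum_pts Vertex"
      unfolding N using proj_pt_stratum_rep_in_stratum_pts by blast
  next
    fix P assume "P \<in> stratum_pts Vertex"
    then obtain v where P: "P = proj_pt v" and v: "v \<in> vecs5" "v \<noteq> (\<lambda>_. 0)" "stratum v = Vertex"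
      unfolding stratum_pts_def pts_where_def by blast
    obtain x1 x2 x3 x4 x5 where v5: "v = vec5 x1 x2 x3 x4 x5"
      and "\<not> (x1 = 0 \<and> x2 = 0 \<and> x3 = 0 \<and> x4 = 0 \<and> x5 = 0)"
      using v(1,2) by (rule vecs5_nonzeroE)
    moreover have "x2 = 0" "x3 = 0" "x4 = 0" "x5 = 0"
      using v(3) unfolding v5 stratum_vec5_eq_iff by simp_all
    ultimately have "x1 \<noteq> 0" by simp
    with \<open>x2 = 0\<close> \<open>x3 = 0\<close> \<open>x4 = 0\<close> \<open>x5 = 0\<close> have "v = (\<lambda>i. x1 * stratum_rep Vertex i)"
      unfolding v5 by (simp add: smult_vec5)
    then show "P \<in> {ptN}" unfolding P N using proj_pt_smult \<open>x1 \<noteq> 0\<close> by simp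
  qed
qed

lemma line_l_eq_strata_pts: "line_l = strata_pts {Line}"
  unfolding line_l_def strata_pts_def by (rule pts_where_cong) (auto simp: stratum_vec5_eq_iff)

lemma plane_pi_eq_strata_pts: "plane_pi = strata_pts {Vertex, Line, Plane}"
  unfolding plane_pi_def strata_pts_def by (rule pts_where_cong) (auto simp: stratum_vec5_eq_iff)

lemma quadric_H_eq_strata_pts: "quadric_H = strata_pts {Line, Hyperbolic}"
  unfolding quadric_H_def strata_pts_def by (rule pts_where_cong) (auto simp: stratum_vec5_eq_iff)

lemma solid_Sigma_eq_strata_pts: "solid_Sigma = strata_pts {Line, Hyperbolic, Solid}"
  unfolding solid_Sigma_def strata_pts_def by (rule pts_where_cong) (auto simp: stratum_vec5_eq_iff)

lemma cone_C_eq_strata_pts: "cone_C = strata_pts {Vertex, Line, Plane, Hyperbolic, Quadric 0}"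
  unfolding cone_C_def strata_pts_def by (rule pts_where_cong) (auto simp: stratum_vec5_eq_iff)

lemma quadric_Q_eq_strata_pts: "lam \<noteq> 0 \<Longrightarrow> quadric_Q lam = strata_pts {Line, Hyperbolic, Quadric lam}"
  unfolding quadric_Q_def strata_pts_def by (rule pts_where_cong) (auto simp: stratum_vec5_eq_iff)

lemma card_stratum_pts:
  assumes "\<And>x. x \<in> A \<Longrightarrow> g x \<in> vecs5 \<and> g x \<noteq> (\<lambda>_. 0) \<and> stratum (g x) = S"
    and "\<And>x1 x2 x3 x4 x5. stratum (vec5 x1 x2 x3 x4 x5) = S \<Longrightarrow>
           \<exists>x\<in>A. \<exists>c. c \<noteq> 0 \<and> g x = vec5 (c*x1) (c*x2) (c*x3) (c*x4) (c*x5)"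
    and "\<And>x y c. x \<in> A \<Longrightarrow> y \<in> A \<Longrightarrow> c \<noteq> 0 \<Longrightarrow> g y = (\<lambda>i. c * g x i) \<Longrightarrow> x = y"
  shows "card (stratum_pts S) = card A"
  unfolding stratum_pts_def
  by (rule card_pts_where[OF homogeneous_stratum[of "\<lambda>T. T = S"]]) (use assms in blast)+

lemma card_stratum_pts_Line: "card (stratum_pts Line :: (nat \<Rightarrow> 'a::{field,finite}) set set) = CARD('a) + 1"
proof -
  define g where "g = case_sum (\<lambda>t::'a. vec5 0 1 t 0 0) (\<lambda>_::unit. vec5 (0::'a) 0 1 0 0)"
  have "card (stratum_pts Line :: (nat \<Rightarrow> 'a) set set) = card ((UNIV::'a set) <+> (UNIV::unit set))"
  proof (rule card_stratum_pts[where g = g])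
    fix x1 x2 x3 x4 x5 :: 'a assume "stratum (vec5 x1 x2 x3 x4 x5) = Line"
    then have "x1 = 0" "x4 = 0" "x5 = 0" "x2 \<noteq> 0 \<or> x3 \<noteq> 0" by (simp_all add: stratum_vec5_eq_iff)
    then show "\<exists>x\<in>UNIV <+> UNIV. \<exists>c. c \<noteq> 0 \<and> g x = vec5 (c*x1) (c*x2) (c*x3) (c*x4) (c*x5)"
    proof (cases "x2 = 0")
      case True
      then show ?thesis using \<open>x1 = 0\<close> \<open>x4 = 0\<close> \<open>x5 = 0\<close> \<open>x2 \<noteq> 0 \<or> x3 \<noteq> 0\<close>
        by (intro bexI[of _ "Inr ()"] exI[of _ "inverse x3"]) (simp_all add: g_def vec5_eq_iff)
    next
      case False
      then show ?thesis using \<open>x1 = 0\<close> \<open>x4 = 0\<close> \<open>x5 = 0\<close>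
        by (intro bexI[of _ "Inl (x3 / x2)"] exI[of _ "inverse x2"])
          (simp_all add: g_def vec5_eq_iff field_simps)
    qed
  qed (auto simp: g_def stratum_vec5_eq_iff vec5_eq_zero_iff smult_vec5 vec5_eq_iff split: sum.splits)
  then show ?thesis by (simp add: card_Plus)
qed

lemma card_stratum_pts_Plane:
  "card (stratum_pts Plane :: (nat \<Rightarrow> 'a::{field,finite}) set set) = CARD('a)^2 - 1"
proof -
  define g where "g = (\<lambda>p::'a \<times> 'a. vec5 1 (fst p) (snd p) 0 0)"
  have "card (stratum_pts Plane :: (nat \<Rightarrow> 'a) set set) = card (UNIV - {(0::'a, 0::'a)})"
  proof (rule card_stratum_pts[where g = g])
    fix x1 x2 x3 x4 x5 :: 'a assume "stratum (vec5 x1 x2 x3 x4 x5) = Plane"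
    then have "x1 \<noteq> 0" "x4 = 0" "x5 = 0" "x2 \<noteq> 0 \<or> x3 \<noteq> 0" by (simp_all add: stratum_vec5_eq_iff)
    then show "\<exists>x\<in>UNIV - {(0, 0)}. \<exists>c. c \<noteq> 0 \<and> g x = vec5 (c*x1) (c*x2) (c*x3) (c*x4) (c*x5)"
      by (intro bexI[of _ "(x2 / x1, x3 / x1)"] exI[of _ "inverse x1"])
        (auto simp: g_def vec5_eq_iff field_simps)
  qed (auto simp: g_def stratum_vec5_eq_iff vec5_eq_zero_iff smult_vec5 vec5_eq_iff prod_eq_iff)
  then show ?thesis by (simp add: card_Diff_singleton power2_eq_square)
qed

lemma card_stratum_pts_Hyperbolic:
  "card (stratum_pts Hyperbolic :: (nat \<Rightarrow> 'a::{field,finite}) set set) = CARD('a)^2 + CARD('a)"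
proof -
  define g where "g = case_sum (\<lambda>p::'a \<times> 'a. vec5 0 (- (fst p * snd p)) (fst p) (snd p) 1)
    (\<lambda>t::'a. vec5 0 t 0 1 0)"
  have "card (stratum_pts Hyperbolic :: (nat \<Rightarrow> 'a) set set) =
      card ((UNIV :: ('a \<times> 'a) set) <+> (UNIV :: 'a set))"
  proof (rule card_stratum_pts[where g = g])
    fix x1 x2 x3 x4 x5 :: 'a assume "stratum (vec5 x1 x2 x3 x4 x5) = Hyperbolic"
    then have "x1 = 0" "x4 \<noteq> 0 \<or> x5 \<noteq> 0" and q: "x2 * x5 + x3 * x4 = 0"
      by (simp_all add: stratum_vec5_eq_iff)
    then show "\<exists>x\<in>UNIV <+> UNIV. \<exists>c. c \<noteq> 0 \<and> g x = vec5 (c*x1) (c*x2) (c*x3) (c*x4) (c*x5)"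
    proof (cases "x5 = 0")
      case True
      then have "x4 \<noteq> 0" "x3 = 0" using \<open>x4 \<noteq> 0 \<or> x5 \<noteq> 0\<close> q by simp_all
      then show ?thesis using True \<open>x1 = 0\<close>
        by (intro bexI[of _ "Inr (x2 / x4)"] exI[of _ "inverse x4"])
          (simp_all add: g_def vec5_eq_iff field_simps)
    next
      case False
      have "x2 * x5 = - (x3 * x4)" using q by (simp add: eq_neg_iff_add_eq_0)
      then have "- (x3 / x5 * (x4 / x5)) = inverse x5 * x2"
        using False by (simp add: field_simps)
      then show ?thesis using False \<open>x1 = 0\<close>
        by (intro bexI[of _ "Inl (x3 / x5, x4 / x5)"] exI[of _ "inverse x5"])
          (simp_all add: g_def vec5_eq_iff field_simps)
    qed
  qed (auto simp: g_def stratum_vec5_eq_iff vec5_eq_zero_iff smult_vec5 vec5_eq_iff prod_eq_iff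
        split: sum.splits)
  then show ?thesis by (simp add: card_Plus card_cartesian_product power2_eq_square)
qed

lemma card_off_plane_params:
  "card ((UNIV \<times> UNIV \<times> (UNIV - {0})) <+> (UNIV \<times> (UNIV - {0})) ::
      ('a::{zero,finite} \<times> 'a \<times> 'a + 'a \<times> 'a) set) = CARD('a)^3 - CARD('a)"
proof -
  obtain m where m: "CARD('a) = Suc m"
    using zero_less_card_finite[where 'a = 'a] gr0_implies_Suc by blast
  have "Suc m * (Suc m * m) + Suc m * m + Suc m = Suc m ^ 3"
    by (simp add: power3_eq_cube algebra_simps)
  then show ?thesis by (simp add: card_Plus card_cartesian_product card_Diff_singleton m)
qed

lemma card_stratum_pts_Solid:
  "card (stratum_pts Solid :: (nat \<Rightarrow> 'a::{field,finite}) set set) = CARD('a)^3 - CARD('a)"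
proof -
  define g where "g = case_sum
    (\<lambda>p::'a \<times> 'a \<times> 'a. vec5 0 (snd (snd p) - fst p * fst (snd p)) (fst p) (fst (snd p)) 1)
    (\<lambda>p::'a \<times> 'a. vec5 0 (fst p) (snd p) 1 0)"
  have "card (stratum_pts Solid :: (nat \<Rightarrow> 'a) set set) =
      card ((UNIV \<times> UNIV \<times> (UNIV - {0})) <+> (UNIV \<times> (UNIV - {0})) ::
        ('a \<times> 'a \<times> 'a + 'a \<times> 'a) set)"
  proof (rule card_stratum_pts[where g = g])
    fix x1 x2 x3 x4 x5 :: 'a assume "stratum (vec5 x1 x2 x3 x4 x5) = Solid"
    then have "x1 = 0" and q: "x2 * x5 + x3 * x4 \<noteq> 0" by (simp_all add: stratum_vec5_eq_iff)
    show "\<exists>x\<in>(UNIV \<times> UNIV \<times> (UNIV - {0})) <+> (UNIV \<times> (UNIV - {0})).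
        \<exists>c. c \<noteq> 0 \<and> g x = vec5 (c*x1) (c*x2) (c*x3) (c*x4) (c*x5)"
    proof (cases "x5 = 0")
      case True
      then have "x4 \<noteq> 0" "x3 \<noteq> 0" using q by auto
      then show ?thesis using True \<open>x1 = 0\<close>
        by (intro bexI[of _ "Inr (x2 / x4, x3 / x4)"] exI[of _ "inverse x4"])
          (simp_all add: g_def vec5_eq_iff field_simps Plus_def)
    next
      case False
      have "(x2 * x5 + x3 * x4) / (x5 * x5) - x3 / x5 * (x4 / x5) = inverse x5 * x2"
        using False by (simp add: field_simps)
      then show ?thesis using False \<open>x1 = 0\<close> q
        by (intro bexI[of _ "Inl (x3 / x5, x4 / x5, (x2 * x5 + x3 * x4) / (x5 * x5))"]
            exI[of _ "inverse x5"])
          (simp_all add: g_def vec5_eq_iff Plus_def divide_inverse_commute)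
    qed
  qed (auto simp: g_def stratum_vec5_eq_iff vec5_eq_zero_iff smult_vec5 vec5_eq_iff prod_eq_iff
        split: sum.splits)
  then show ?thesis by (simp add: card_off_plane_params)
qed

lemma card_stratum_pts_Quadric:
  "card (stratum_pts (Quadric lam) :: (nat \<Rightarrow> 'a::{field,finite}) set set) = CARD('a)^3 - CARD('a)"
proof -
  define g where "g = case_sum
    (\<lambda>p::'a \<times> 'a \<times> 'a. vec5 1 (- (lam + fst p * fst (snd p)) / snd (snd p)) (fst p) (fst (snd p)) (snd (snd p)))
    (\<lambda>p::'a \<times> 'a. vec5 1 (fst p) (- lam / snd p) (snd p) 0)"
  have "card (stratum_pts (Quadric lam) :: (nat \<Rightarrow> 'a) set set) =
      card ((UNIV \<times> UNIV \<times> (UNIV - {0})) <+> (UNIV \<times> (UNIV - {0})) ::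
        ('a \<times> 'a \<times> 'a + 'a \<times> 'a) set)"
  proof (rule card_stratum_pts[where g = g])
    fix x1 x2 x3 x4 x5 :: 'a assume "stratum (vec5 x1 x2 x3 x4 x5) = Quadric lam"
    then have "x1 \<noteq> 0" "x4 \<noteq> 0 \<or> x5 \<noteq> 0" and q: "x2 * x5 + x3 * x4 + lam * x1^2 = 0"
      by (simp_all add: stratum_vec5_eq_iff)
    show "\<exists>x\<in>(UNIV \<times> UNIV \<times> (UNIV - {0})) <+> (UNIV \<times> (UNIV - {0})).
        \<exists>c. c \<noteq> 0 \<and> g x = vec5 (c*x1) (c*x2) (c*x3) (c*x4) (c*x5)"
    proof (cases "x5 = 0")
      case True
      then have "x4 \<noteq> 0" using \<open>x4 \<noteq> 0 \<or> x5 \<noteq> 0\<close> by simp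
      have "x3 * x4 + lam * (x1 * x1) = 0" using q True by (simp add: power2_eq_square)
      then have "- (lam * (x1 * x1)) = x3 * x4" by (simp add: neg_eq_iff_add_eq_0 add.commute)
      then have "- lam / (x4 / x1) = inverse x1 * x3"
        using \<open>x4 \<noteq> 0\<close> \<open>x1 \<noteq> 0\<close> by (simp add: field_simps)
      then show ?thesis using True \<open>x1 \<noteq> 0\<close> \<open>x4 \<noteq> 0\<close>
        by (intro bexI[of _ "Inr (x2 / x1, x4 / x1)"] exI[of _ "inverse x1"])
          (simp_all add: g_def vec5_eq_iff Plus_def divide_inverse_commute)
    next
      case False
      have x2: "x2 = - (x3 * x4 + lam * x1^2) / x5"
        using q False eq_neg_iff_add_eq_0[of "x2 * x5" "x3 * x4 + lam * x1^2"]
        by (simp add: eq_divide_eq add.assoc)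
      have "- (lam + x3 / x1 * (x4 / x1)) / (x5 / x1) = inverse x1 * x2"
        unfolding x2 using False \<open>x1 \<noteq> 0\<close> by (simp add: field_simps power2_eq_square)
      then show ?thesis using False \<open>x1 \<noteq> 0\<close>
        by (intro bexI[of _ "Inl (x3 / x1, x4 / x1, x5 / x1)"] exI[of _ "inverse x1"])
          (simp_all add: g_def vec5_eq_iff Plus_def divide_inverse_commute)
    qed
  qed (auto simp: g_def stratum_vec5_eq_iff vec5_eq_zero_iff smult_vec5 vec5_eq_iff prod_eq_iff
        field_simps split: sum.splits)
  then show ?thesis by (simp add: card_off_plane_params)
qed

lemma geometric_sets_eq_stratum_pts:
  shows "line_l = stratum_pts Line"
    and "plane_pi - (line_l \<union> {ptN}) = stratum_pts Plane"
    and "quadric_H - line_l = stratum_pts Hyperbolic"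
    and "solid_Sigma - quadric_H = stratum_pts Solid"
    and "cone_C - (plane_pi \<union> quadric_H) = stratum_pts (Quadric 0)"
    and "lam \<noteq> 0 \<Longrightarrow> quadric_Q lam - quadric_H = stratum_pts (Quadric lam)"
  unfolding line_l_eq_strata_pts plane_pi_eq_strata_pts quadric_H_eq_strata_pts solid_Sigma_eq_strata_pts cone_C_eq_strata_pts quadric_Q_eq_strata_pts singleton_ptN_eq_stratum_pts
    strata_pts_singleton[symmetric] strata_pts_Un strata_pts_diff
  by (rule arg_cong[where f = strata_pts], auto)+

lemma quadric_family_eq:
  "{quadric_Q lam - quadric_H | lam. lam \<noteq> (0::'a::field)} = stratum_pts ` Quadric ` (- {0})"
proof -
  have "{quadric_Q lam - quadric_H | lam. lam \<noteq> (0::'a)} =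
      (\<lambda>lam. quadric_Q lam - quadric_H) ` (- {0})"
    by auto
  also have "\<dots> = stratum_pts ` Quadric ` (- {0})"
    unfolding image_image by (rule image_cong) (simp_all add: geometric_sets_eq_stratum_pts(6))
  finally show ?thesis .
qed

lemma card_image_stratum_pts: "card (stratum_pts ` A) = card A"
  by (rule card_image[OF inj_on_subset[OF inj_stratum_pts]]) simp

lemma range_stratum_pts:
  "range stratum_pts =
     {stratum_pts Vertex, stratum_pts Line, stratum_pts Plane, stratum_pts Hyperbolic,
      stratum_pts Solid, stratum_pts (Quadric 0)} \<union> stratum_pts ` Quadric ` (- {0})"
proof -
  have "S \<in> {Vertex, Line, Plane, Hyperbolic, Solid, Quadric 0} \<union> Quadric ` (- {0})"
    for S :: "'a stratum"
    by (cases S) auto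
  then have U: "UNIV = {Vertex, Line, Plane, Hyperbolic, Solid, Quadric 0} \<union> Quadric ` (- {0::'a})"
    by blast
  show ?thesis by (subst U) (simp only: image_Un image_insert image_empty)
qed

theorem lemma3p1:
  fixes \<alpha> :: "'a::{field, finite}" and h q :: nat
  assumes "q = 2 ^ h" and "CARD('a) = q"
    and "irreducible [:\<alpha>, 1, 1:]"
  shows "orbits (Ggrp \<alpha>) =
           {{ptN}, line_l, plane_pi - (line_l \<union> {ptN}), quadric_H - line_l,
            solid_Sigma - quadric_H, cone_C - (plane_pi \<union> quadric_H)}
           \<union> {quadric_Q lam - quadric_H | lam. lam \<noteq> 0}
       \<and> card (orbits (Ggrp \<alpha>)) = q + 5
       \<and> card {quadric_Q lam - quadric_H | lam. lam \<noteq> (0::'a)} = q - 1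
       \<and> card (line_l :: (nat \<Rightarrow> 'a) set set) = q + 1
       \<and> card (plane_pi - (line_l \<union> {ptN}) :: (nat \<Rightarrow> 'a) set set) = q^2 - 1
       \<and> card (quadric_H - line_l :: (nat \<Rightarrow> 'a) set set) = q^2 + q
       \<and> card (solid_Sigma - quadric_H :: (nat \<Rightarrow> 'a) set set) = q^3 - q
       \<and> card (cone_C - (plane_pi \<union> quadric_H) :: (nat \<Rightarrow> 'a) set set) = q^3 - q
       \<and> (\<forall>lam::'a. lam \<noteq> 0 \<longrightarrow> card (quadric_Q lam - quadric_H) = q^3 - q)"
proof -
  have two: "(2::'a) = 0"
    using assms(1,2) by (intro two_eq_zero_if_card_power_of_two[of h]) simp
  have orbits: "orbits (Ggrp \<alpha>) = range stratum_pts"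
    by (rule orbits_Ggrp[OF two assms(3)])
  have "card (range stratum_pts :: (nat \<Rightarrow> 'a) set set set) = q + 5"
    using card_UNIV_stratum[where 'a = 'a] assms(2) by (simp add: card_image_stratum_pts)
  moreover have "card (stratum_pts ` Quadric ` (- {0::'a})) = q - 1"
    using assms(2) by (simp add: card_image_stratum_pts card_image inj_on_def Compl_eq_Diff_UNIV
        card_Diff_singleton)
  ultimately show ?thesis
    unfolding geometric_sets_eq_stratum_pts(2-5) unfolding geometric_sets_eq_stratum_pts(1)
      singleton_ptN_eq_stratum_pts quadric_family_eq
    using orbits range_stratum_pts assms(2)
    by (simp add: geometric_sets_eq_stratum_pts(6) card_stratum_pts_Line card_stratum_pts_Plane
        card_stratum_pts_Hyperbolic card_stratum_pts_Solid card_stratum_pts_Quadric)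
qed

end
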